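(* Let $F$ be a nonempty subset of $\mathbb{R}^2$ and $u \in \mathbb{S}$. If $F - F = \{x - y : x,y \in F\}$ is disjoint from some double wedge around $u$, then the restriction of $T_u$ to $F$ is a quasi-isometric embedding $F \to \mathbb{R}$.
   Context: $\mathbb{S}$ is the unit circle in $\mathbb{R}^2$. For $u = (u_1,u_2) \in \mathbb{S}$, $T_u : \mathbb{R}^2 \to \mathbb{R}$ is the orthogonal projection parallel to $u$, i.e. $T_u(x) = \langle x, (u_2,-u_1)\rangle$, so $T_u(x)=T_u(y)$ iff $x - y \in \mathbb{R}u$. A double wedge around $u$ is a set $C^u_{s,\varepsilon} := \{tv : t \in \mathbb{R}, |t| > s, v \in \mathbb{S}, \|v-u\| < \varepsilon\}$ for some $s,\varepsilon > 0$. For $\lambda,\delta>0$, a map $f : X \to Y$ between subsets of Euclidean spaces is a $(\lambda,\delta)$-quasi-isometry if $\frac{1}{\lambda}\|x-x'\| - \delta \leq \|f(x)-f(x')\| \leq \lambda\|x-x'\| + \delta$ for all $x,x' \in X$ and every $y \in Y$ is within distance $<\delta$ of some $f(x)$; a quasi-isometry is a $(\lambda,\delta)$-quasi-isometry for some $\lambda,\delta>0$. A map $g : X \to \mathbb{R}$ is a quasi-isometric embedding if $g$ is a quasi-isometry $X \to g(X)$. *)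

theory Defs
  imports "HOL-Analysis.Analysis"
begin

text \<open>The plane R^2 is modelled as real \<times> real (Euclidean norm).\<close>

definition unit_circle :: "(real \<times> real) set" where
  "unit_circle = sphere 0 1"

definition proj_T :: "real \<times> real \<Rightarrow> real \<times> real \<Rightarrow> real" where
  "proj_T u x = x \<bullet> (snd u, - fst u)"

definition double_wedge :: "real \<times> real \<Rightarrow> real \<Rightarrow> real \<Rightarrow> (real \<times> real) set" where
  "double_wedge u s \<epsilon> = {t *\<^sub>R v | t v. \<bar>t\<bar> > s \<and> v \<in> unit_circle \<and> norm (v - u) < \<epsilon>}"

definition quasi_isometry_with ::
  "real \<Rightarrow> real \<Rightarrow> ('a::real_normed_vector \<Rightarrow> 'b::real_normed_vector) \<Rightarrow> 'a set \<Rightarrow> 'b set \<Rightarrow> bool" where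
  "quasi_isometry_with lam \<delta> f X Y \<longleftrightarrow>
     (\<forall>x\<in>X. \<forall>x'\<in>X. norm (x - x') / lam - \<delta> \<le> norm (f x - f x')
                    \<and> norm (f x - f x') \<le> lam * norm (x - x') + \<delta>)
     \<and> (\<forall>y\<in>Y. \<exists>x\<in>X. norm (y - f x) < \<delta>)"

definition quasi_isometry ::
  "('a::real_normed_vector \<Rightarrow> 'b::real_normed_vector) \<Rightarrow> 'a set \<Rightarrow> 'b set \<Rightarrow> bool" where
  "quasi_isometry f X Y \<longleftrightarrow> (\<exists>lam>0. \<exists>\<delta>>0. quasi_isometry_with lam \<delta> f X Y)"

definition qi_embedding :: "('a::real_normed_vector \<Rightarrow> real) \<Rightarrow> 'a set \<Rightarrow> bool" where
  "qi_embedding g X \<longleftrightarrow> quasi_isometry g X (g ` X)"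

end

theory Submission
  imports Defs
begin

text \<open>
  A difference d = x - y of two points of F with norm d > s lies outside the double wedge,
  so its direction v = d / norm d is at distance at least \<epsilon> from both u and -u.
  For unit vectors, 2 |T_u v| = norm (v - u) * norm (v + u), hence |T_u d| \<ge> \<epsilon>^2/2 * norm d.
  Together with the trivial bound |T_u d| \<le> norm d this makes T_u bi-Lipschitz on F up to
  the additive constant needed for short differences.
\<close>

lemma proj_T_diff: "proj_T u x - proj_T u y = proj_T u (x - y)"
  by (simp add: proj_T_def inner_diff_left)

lemma proj_T_scaleR: "proj_T u (c *\<^sub>R x) = c * proj_T u x"
  by (simp add: proj_T_def)

lemma abs_proj_T_le_norm:
  assumes "u \<in> unit_circle"
  shows "\<bar>proj_T u d\<bar> \<le> norm d"
proof -
  have "norm (snd u, - fst u) = 1"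
    using assms by (cases u) (simp add: unit_circle_def norm_prod_def)
  then show ?thesis
    using Cauchy_Schwarz_ineq2[of d "(snd u, - fst u)"] by (simp add: proj_T_def)
qed

lemma abs_proj_T_unit_eq:
  assumes "u \<in> unit_circle" and "v \<in> unit_circle"
  shows "2 * \<bar>proj_T u v\<bar> = norm (v - u) * norm (v + u)"
proof -
  obtain u1 u2 v1 v2 where uv: "u = (u1, u2)" "v = (v1, v2)" by fastforce
  have u1: "u1\<^sup>2 + u2\<^sup>2 = 1" and v1: "v1\<^sup>2 + v2\<^sup>2 = 1"
    using assms uv by (simp_all add: unit_circle_def norm_prod_def)
  have "(2 * proj_T u v)\<^sup>2 = ((v1 - u1)\<^sup>2 + (v2 - u2)\<^sup>2) * ((v1 + u1)\<^sup>2 + (v2 + u2)\<^sup>2)"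
  proof -
    have "((v1 - u1)\<^sup>2 + (v2 - u2)\<^sup>2) * ((v1 + u1)\<^sup>2 + (v2 + u2)\<^sup>2)
        = ((v1\<^sup>2 + v2\<^sup>2) + (u1\<^sup>2 + u2\<^sup>2))\<^sup>2 - 4 * (v1 * u1 + v2 * u2)\<^sup>2"
      by algebra
    also have "\<dots> = 4 * ((v1\<^sup>2 + v2\<^sup>2) * (u1\<^sup>2 + u2\<^sup>2) - (v1 * u1 + v2 * u2)\<^sup>2)"
      using u1 v1 by simp
    also have "\<dots> = (2 * proj_T u v)\<^sup>2"
      using uv by (simp add: proj_T_def power2_eq_square algebra_simps)
    finally show ?thesis by simp
  qed
  also have "\<dots> = (norm (v - u) * norm (v + u))\<^sup>2"
    using uv by (simp add: norm_prod_def power_mult_distrib)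
  finally show ?thesis
    by (metis abs_of_nonneg norm_ge_zero real_sqrt_abs zero_le_mult_iff abs_mult abs_numeral)
qed

lemma abs_proj_T_ge_outside_double_wedge:
  assumes u: "u \<in> unit_circle" and "\<epsilon> > 0" and "norm d > s" and "s \<ge> 0"
    and "d \<notin> double_wedge u s \<epsilon>"
  shows "\<epsilon>\<^sup>2 / 2 * norm d \<le> \<bar>proj_T u d\<bar>"
proof -
  define v where "v = (1 / norm d) *\<^sub>R d"
  have "norm d > 0" using assms by linarith
  then have v: "v \<in> unit_circle" and d: "d = norm d *\<^sub>R v" "d = (- norm d) *\<^sub>R (- v)"
    by (simp_all add: v_def unit_circle_def)
  have "- v \<in> unit_circle" using v by (simp add: unit_circle_def)
  have far: "\<epsilon> \<le> norm (w - u)" if "w \<in> unit_circle" and "d = t *\<^sub>R w" and "\<bar>t\<bar> = norm d" for w t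
    using that assms unfolding double_wedge_def by (metis (mono_tags, lifting) mem_Collect_eq not_le)
  have "\<epsilon> * \<epsilon> \<le> norm (v - u) * norm (v + u)"
    using far[OF v d(1)] far[OF \<open>- v \<in> unit_circle\<close> d(2)] \<open>\<epsilon> > 0\<close>
    by (intro mult_mono) (auto simp: norm_minus_commute add.commute)
  then have "\<epsilon>\<^sup>2 / 2 \<le> \<bar>proj_T u v\<bar>"
    using abs_proj_T_unit_eq[OF u v] by (simp add: power2_eq_square)
  then have "\<epsilon>\<^sup>2 / 2 * norm d \<le> \<bar>proj_T u v\<bar> * norm d"
    using \<open>norm d > 0\<close> by (simp add: mult_right_mono)
  also have "\<dots> = \<bar>proj_T u d\<bar>"
    using d(1) \<open>norm d > 0\<close> by (metis proj_T_scaleR abs_mult abs_norm_cancel mult.commute)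
  finally show ?thesis .
qed

lemma qi_embedding_if_coarse_bilipschitz:
  fixes g :: "'a::real_normed_vector \<Rightarrow> real"
  assumes "c > 0" and "s \<ge> 0"
    and upper: "\<And>x y. x \<in> X \<Longrightarrow> y \<in> X \<Longrightarrow> \<bar>g x - g y\<bar> \<le> norm (x - y)"
    and lower: "\<And>x y. x \<in> X \<Longrightarrow> y \<in> X \<Longrightarrow> norm (x - y) > s \<Longrightarrow> c * norm (x - y) \<le> \<bar>g x - g y\<bar>"
  shows "qi_embedding g X"
proof -
  define lam where "lam = 1 + 1 / c"
  have "lam \<ge> 1" and "1 / lam \<le> c"
    using \<open>c > 0\<close> by (auto simp: lam_def field_simps)
  have "quasi_isometry_with lam (s + 1) g X (g ` X)"
    unfolding quasi_isometry_with_def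
  proof (intro conjI ballI)
    fix x y assume xy: "x \<in> X" "y \<in> X"
    have short: "norm (x - y) / lam \<le> norm (x - y)"
      using \<open>lam \<ge> 1\<close> by (simp add: divide_le_eq mult_le_cancel_left1)
    show "norm (g x - g y) \<le> lam * norm (x - y) + (s + 1)"
      using upper[OF xy] \<open>lam \<ge> 1\<close> \<open>s \<ge> 0\<close> mult_right_mono[of 1 lam "norm (x - y)"] by simp
    show "norm (x - y) / lam - (s + 1) \<le> norm (g x - g y)"
    proof (cases "norm (x - y) > s")
      case True
      have "norm (x - y) / lam \<le> c * norm (x - y)"
        using mult_right_mono[OF \<open>1 / lam \<le> c\<close>, of "norm (x - y)"] by simp
      then show ?thesis using lower[OF xy True] \<open>s \<ge> 0\<close> by simp
    next
      case False
      then show ?thesis using short \<open>s \<ge> 0\<close> by simp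
    qed
  next
    fix z assume "z \<in> g ` X"
    then show "\<exists>x\<in>X. norm (z - g x) < s + 1" using \<open>s \<ge> 0\<close> by force
  qed
  moreover have "lam > 0" "s + 1 > 0" using \<open>lam \<ge> 1\<close> \<open>s \<ge> 0\<close> by linarith+
  ultimately show ?thesis unfolding qi_embedding_def quasi_isometry_def by blast
qed

theorem lemma3p1:
  fixes F :: "(real \<times> real) set" and u :: "real \<times> real"
  assumes "F \<noteq> {}" and "u \<in> unit_circle"
    and "\<exists>s>0. \<exists>\<epsilon>>0. {x - y | x y. x \<in> F \<and> y \<in> F} \<inter> double_wedge u s \<epsilon> = {}"
  shows "qi_embedding (proj_T u) F"
proof -
  obtain s \<epsilon> where "s > 0" and "\<epsilon> > 0"
    and disjoint: "{x - y | x y. x \<in> F \<and> y \<in> F} \<inter> double_wedge u s \<epsilon> = {}"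
    using assms(3) by blast
  show ?thesis
  proof (rule qi_embedding_if_coarse_bilipschitz[of "\<epsilon>\<^sup>2 / 2" s])
    fix x y assume xy: "x \<in> F" "y \<in> F"
    then have "x - y \<notin> double_wedge u s \<epsilon>" using disjoint by blast
    then show "norm (x - y) > s \<Longrightarrow> \<epsilon>\<^sup>2 / 2 * norm (x - y) \<le> \<bar>proj_T u x - proj_T u y\<bar>"
      using abs_proj_T_ge_outside_double_wedge[OF assms(2) \<open>\<epsilon> > 0\<close>] \<open>s > 0\<close>
      by (auto simp: proj_T_diff)
    show "\<bar>proj_T u x - proj_T u y\<bar> \<le> norm (x - y)"
      using abs_proj_T_le_norm[OF assms(2)] by (simp add: proj_T_diff)
  qed (use \<open>s > 0\<close> \<open>\<epsilon> > 0\<close> in auto)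
qed

end
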